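(* For every theory $\Sigma$ and formula $A \Rightarrow B$: $\Sigma \vdash A \Rightarrow B$ if and only if there is a finite $\Sigma' \subseteq \Sigma^{\mathrm{PL}}$ such that $\Sigma' \vdash_\mathcal{R} A \Rightarrow B$, where $\mathcal{R}$ is the deduction system consisting of (Ax) and (Cut).
   Context: $Y$ is a non-empty finite set of attributes and $\mathcal{T}_Y = \{y^i \mid y \in Y, i \in \mathbb{Z}\}$; $M + j = \{y^{i+j} \mid y^i \in M\}$. A formula is $A \Rightarrow B$ with $A,B$ finite subsets of $\mathcal{T}_Y$; a theory is a set of formulas; $\Sigma^{\mathrm{PL}} = \{A+i \Rightarrow B+i \mid A \Rightarrow B \in \Sigma, i \in \mathbb{Z}\}$. Deduction rules (for arbitrary finite $A,B,C,D \subseteq \mathcal{T}_Y$, $i \in \mathbb{Z}$): (Ax) infer $A \cup B \Rightarrow A$; (Cut) from $A \Rightarrow B$ and $B \cup C \Rightarrow D$ infer $A \cup C \Rightarrow D$; (Shf) from $A \Rightarrow B$ infer $A+i \Rightarrow B+i$. For a set of rules $\mathcal{R}$, an $\mathcal{R}$-proof of $A \Rightarrow B$ by $\Sigma$ is a finite sequence of formulas ending with $A \Rightarrow B$ in which each member is in $\Sigma$ or is the conclusion of a rule in $\mathcal{R}$ whose hypotheses occur earlier; $\Sigma \vdash_\mathcal{R} A \Rightarrow B$ means such a proof exists, and $\Sigma \vdash A \Rightarrow B$ denotes $\vdash_\mathcal{R}$ for $\mathcal{R}$ = \{(Ax), (Cut), (Shf)\}. *)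

theory Defs
  imports Main
begin

text \<open>Temporal attributes y^i are pairs (y, i); formulas A \<Rightarrow> B are pairs (A, B)
  of finite sets of temporal attributes.\<close>

type_synonym 'y tattr = "'y \<times> int"
type_synonym 'y fml = "'y tattr set \<times> 'y tattr set"

definition shift :: "'y tattr set \<Rightarrow> int \<Rightarrow> 'y tattr set" where
  "shift M j = (\<lambda>(y, i). (y, i + j)) ` M"

definition is_formula :: "'y fml \<Rightarrow> bool" where
  "is_formula f \<longleftrightarrow> finite (fst f) \<and> finite (snd f)"

definition PL :: "'y fml set \<Rightarrow> 'y fml set" where
  "PL \<Sigma> = {(shift A i, shift B i) | A B i. (A, B) \<in> \<Sigma>}"

datatype rule = Ax | Cut | Shf

definition rule_concl :: "rule \<Rightarrow> 'y fml set \<Rightarrow> 'y fml \<Rightarrow> bool" where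
  "rule_concl r H f \<longleftrightarrow>
    (case r of
      Ax \<Rightarrow> (\<exists>A B. finite A \<and> finite B \<and> f = (A \<union> B, A))
    | Cut \<Rightarrow> (\<exists>A B C D. finite A \<and> finite B \<and> finite C \<and> finite D \<and>
               (A, B) \<in> H \<and> (B \<union> C, D) \<in> H \<and> f = (A \<union> C, D))
    | Shf \<Rightarrow> (\<exists>A B i. finite A \<and> finite B \<and> (A, B) \<in> H \<and> f = (shift A i, shift B i)))"

definition is_proof :: "rule set \<Rightarrow> 'y fml set \<Rightarrow> 'y fml list \<Rightarrow> bool" where
  "is_proof R \<Sigma> ps \<longleftrightarrow>
    (\<forall>k < length ps. ps ! k \<in> \<Sigma> \<or>
       (\<exists>r \<in> R. rule_concl r (set (take k ps)) (ps ! k)))"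

definition derivable :: "rule set \<Rightarrow> 'y fml set \<Rightarrow> 'y fml \<Rightarrow> bool" where
  "derivable R \<Sigma> f \<longleftrightarrow> (\<exists>ps. ps \<noteq> [] \<and> is_proof R \<Sigma> ps \<and> last ps = f)"

definition theory_of :: "'y fml set \<Rightarrow> bool" where
  "theory_of \<Sigma> \<longleftrightarrow> (\<forall>f \<in> \<Sigma>. is_formula f)"

end

theory Submission
  imports Defs
begin

text \<open>Every instance of (Shf) can be pushed up to the leaves of a derivation, since (Ax) and
  (Cut) commute with shifting. The leaves then become shifted members of \<open>\<Sigma>\<close>, i.e. members
  of \<open>\<Sigma>\<^sup>P\<^sup>L\<close>, which is closed under shifting; finitely many of them suffice because a
  derivation is finite. Conversely, every member of \<open>\<Sigma>\<^sup>P\<^sup>L\<close> is one (Shf) step away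
  from \<open>\<Sigma>\<close>.\<close>

inductive derives :: "rule set \<Rightarrow> 'y fml set \<Rightarrow> 'y fml \<Rightarrow> bool" for R \<Sigma> where
  hyp: "f \<in> \<Sigma> \<Longrightarrow> derives R \<Sigma> f"
| ax: "Ax \<in> R \<Longrightarrow> finite A \<Longrightarrow> finite B \<Longrightarrow> derives R \<Sigma> (A \<union> B, A)"
| cut: "Cut \<in> R \<Longrightarrow> finite A \<Longrightarrow> finite B \<Longrightarrow> finite C \<Longrightarrow> finite D \<Longrightarrow>
        derives R \<Sigma> (A, B) \<Longrightarrow> derives R \<Sigma> (B \<union> C, D) \<Longrightarrow> derives R \<Sigma> (A \<union> C, D)"
| shf: "Shf \<in> R \<Longrightarrow> finite A \<Longrightarrow> finite B \<Longrightarrow> derives R \<Sigma> (A, B) \<Longrightarrow>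
        derives R \<Sigma> (shift A i, shift B i)"

lemma rule_concl_mono: "rule_concl r H f \<Longrightarrow> H \<subseteq> H' \<Longrightarrow> rule_concl r H' f"
  by (cases r; simp add: rule_concl_def; blast)

lemma is_proof_Nil: "is_proof R \<Sigma> []"
  by (simp add: is_proof_def)

lemma is_proof_snoc_iff:
  "is_proof R \<Sigma> (ps @ [f]) \<longleftrightarrow>
     is_proof R \<Sigma> ps \<and> (f \<in> \<Sigma> \<or> (\<exists>r \<in> R. rule_concl r (set ps) f))"
  by (auto simp: is_proof_def nth_append less_Suc_eq)

lemma is_proof_append:
  assumes "is_proof R \<Sigma> ps" and "is_proof R \<Sigma> qs"
  shows "is_proof R \<Sigma> (ps @ qs)"
  using assms(2)
proof (induction qs rule: rev_induct)
  case Nil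
  then show ?case using assms(1) by simp
next
  case (snoc q qs)
  then show ?case
    using rule_concl_mono[of _ "set qs" q "set (ps @ qs)"]
    by (simp only: is_proof_snoc_iff append_assoc[symmetric]) auto
qed

lemma derives_if_rule_concl:
  assumes "r \<in> R" and "rule_concl r H f" and "\<And>g. g \<in> H \<Longrightarrow> derives R \<Sigma> g"
  shows "derives R \<Sigma> f"
  using assms by (cases r) (auto simp: rule_concl_def intro: derives.intros)

lemma derives_of_is_proof: "is_proof R \<Sigma> ps \<Longrightarrow> g \<in> set ps \<Longrightarrow> derives R \<Sigma> g"
proof (induction ps arbitrary: g rule: rev_induct)
  case Nil
  then show ?case by simp
next
  case (snoc f ps)
  then have "f \<in> \<Sigma> \<or> (\<exists>r \<in> R. rule_concl r (set ps) f)" "is_proof R \<Sigma> ps"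
    by (simp_all add: is_proof_snoc_iff)
  then have "derives R \<Sigma> f"
    using snoc.IH by (auto intro: derives.hyp derives_if_rule_concl)
  moreover from snoc.prems(2) have "g = f \<or> g \<in> set ps" by simp
  ultimately show ?case using snoc.IH \<open>is_proof R \<Sigma> ps\<close> by blast
qed

lemma derivable_snoc:
  assumes "is_proof R \<Sigma> ps" and "f \<in> \<Sigma> \<or> (\<exists>r \<in> R. rule_concl r (set ps) f)"
  shows "derivable R \<Sigma> f"
  unfolding derivable_def using assms
  by (intro exI[of _ "ps @ [f]"]) (simp add: is_proof_snoc_iff)

lemma derivable_of_derives: "derives R \<Sigma> f \<Longrightarrow> derivable R \<Sigma> f"
proof (induction rule: derives.induct)
  case (hyp f)
  then show ?case by (intro derivable_snoc[OF is_proof_Nil]) simp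
next
  case (ax A B)
  then have "rule_concl Ax (set []) (A \<union> B, A)" by (auto simp: rule_concl_def)
  with ax show ?case by (intro derivable_snoc[OF is_proof_Nil]) blast
next
  case (cut A B C D)
  then obtain ps qs where
    ps: "ps \<noteq> []" "is_proof R \<Sigma> ps" "last ps = (A, B)" and
    qs: "qs \<noteq> []" "is_proof R \<Sigma> qs" "last qs = (B \<union> C, D)"
    by (auto simp: derivable_def)
  have "(A, B) \<in> set (ps @ qs)" "(B \<union> C, D) \<in> set (ps @ qs)"
    using ps qs by (auto dest: last_in_set)
  with cut have "rule_concl Cut (set (ps @ qs)) (A \<union> C, D)"
    by (auto simp: rule_concl_def)
  with cut ps qs show ?case by (intro derivable_snoc[OF is_proof_append]) blast+
next
  case (shf A B i)
  then obtain ps where ps: "ps \<noteq> []" "is_proof R \<Sigma> ps" "last ps = (A, B)"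
    by (auto simp: derivable_def)
  then have "(A, B) \<in> set ps" by (auto dest: last_in_set)
  with shf have "rule_concl Shf (set ps) (shift A i, shift B i)"
    by (auto simp: rule_concl_def)
  with shf ps show ?case by (intro derivable_snoc) blast+
qed

lemma derivable_iff_derives: "derivable R \<Sigma> f \<longleftrightarrow> derives R \<Sigma> f"
  using derivable_of_derives derives_of_is_proof last_in_set
  unfolding derivable_def by metis

lemma derives_mono: "derives R \<Sigma> f \<Longrightarrow> R \<subseteq> R' \<Longrightarrow> \<Sigma> \<subseteq> \<Sigma>' \<Longrightarrow> derives R' \<Sigma>' f"
  by (induction rule: derives.induct) (auto intro: derives.intros)

lemma derives_finite_hyps:
  "derives R \<Sigma> f \<Longrightarrow> \<exists>\<Sigma>'. finite \<Sigma>' \<and> \<Sigma>' \<subseteq> \<Sigma> \<and> derives R \<Sigma>' f"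
proof (induction rule: derives.induct)
  case (hyp f)
  then show ?case by (auto intro!: exI[of _ "{f}"] derives.hyp)
next
  case (ax A B)
  then show ?case by (auto intro!: exI[of _ "{}"] derives.ax)
next
  case (cut A B C D)
  then obtain \<Sigma>\<^sub>1 \<Sigma>\<^sub>2 where
    "finite \<Sigma>\<^sub>1" "\<Sigma>\<^sub>1 \<subseteq> \<Sigma>" "derives R \<Sigma>\<^sub>1 (A, B)"
    "finite \<Sigma>\<^sub>2" "\<Sigma>\<^sub>2 \<subseteq> \<Sigma>" "derives R \<Sigma>\<^sub>2 (B \<union> C, D)"
    by blast
  with cut.hyps show ?case
    by (intro exI[of _ "\<Sigma>\<^sub>1 \<union> \<Sigma>\<^sub>2"]) (auto intro: derives.cut derives_mono)
next
  case (shf A B i)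
  then show ?case by (auto intro: derives.shf)
qed

lemma derives_trans:
  "derives R \<Sigma>' f \<Longrightarrow> (\<And>g. g \<in> \<Sigma>' \<Longrightarrow> derives R \<Sigma> g) \<Longrightarrow> derives R \<Sigma> f"
  by (induction rule: derives.induct) (auto intro: derives.intros)

lemma shift_Un: "shift (A \<union> B) i = shift A i \<union> shift B i"
  by (simp add: shift_def image_Un)

lemma shift_shift: "shift (shift A j) i = shift A (j + i)"
  unfolding shift_def image_image by (simp add: case_prod_beta add.assoc)

lemma shift_0: "shift A 0 = A"
  by (simp add: shift_def case_prod_beta)

lemma finite_shift: "finite A \<Longrightarrow> finite (shift A i)"
  by (simp add: shift_def)

definition shift_closed :: "'y fml set \<Rightarrow> bool" where
  "shift_closed \<Sigma> \<longleftrightarrow> (\<forall>A B i. (A, B) \<in> \<Sigma> \<longrightarrow> (shift A i, shift B i) \<in> \<Sigma>)"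

lemma shift_closed_PL: "shift_closed (PL \<Sigma>)"
  unfolding shift_closed_def PL_def by (auto simp: shift_shift) blast

lemma subset_PL: "\<Sigma> \<subseteq> PL \<Sigma>"
  unfolding PL_def by (clarsimp, metis shift_0)

lemma derives_shift:
  assumes "derives R \<Sigma> (A, B)" and "shift_closed \<Sigma>"
  shows "derives R \<Sigma> (shift A i, shift B i)"
  using assms(1)
proof (induction "(A, B)" arbitrary: A B i rule: derives.induct)
  case hyp
  with assms(2) show ?case by (auto simp: shift_closed_def intro: derives.hyp)
next
  case (ax A B)
  then show ?case by (auto simp: shift_Un finite_shift intro: derives.ax)
next
  case (cut A B C D)
  then show ?case
    by (auto simp: shift_Un finite_shift intro: derives.cut[where B = "shift B i"])
next
  case (shf A B j)
  then show ?case by (simp add: shift_shift)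
qed

lemma derives_without_Shf:
  "derives R \<Sigma> f \<Longrightarrow> shift_closed \<Sigma> \<Longrightarrow> derives (R - {Shf}) \<Sigma> f"
  by (induction rule: derives.induct) (auto intro: derives.intros derives_shift)

lemma derives_PL:
  assumes "theory_of \<Sigma>" and "Shf \<in> R" and "g \<in> PL \<Sigma>"
  shows "derives R \<Sigma> g"
proof -
  obtain A B i where "(A, B) \<in> \<Sigma>" and g: "g = (shift A i, shift B i)"
    using assms(3) by (auto simp: PL_def)
  moreover from this assms(1) have "finite A" "finite B"
    by (auto simp: theory_of_def is_formula_def)
  ultimately show ?thesis using assms(2) by (auto intro: derives.shf derives.hyp)
qed

theorem theorem9:
  fixes \<Sigma> :: "('y::finite) fml set" and A B :: "'y tattr set"
  assumes "theory_of \<Sigma>" and "finite A" and "finite B"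
  shows "derivable {Ax, Cut, Shf} \<Sigma> (A, B) \<longleftrightarrow>
         (\<exists>\<Sigma>'. finite \<Sigma>' \<and> \<Sigma>' \<subseteq> PL \<Sigma> \<and> derivable {Ax, Cut} \<Sigma>' (A, B))"
proof
  assume "derivable {Ax, Cut, Shf} \<Sigma> (A, B)"
  then have "derives {Ax, Cut, Shf} (PL \<Sigma>) (A, B)"
    by (auto simp: derivable_iff_derives intro: derives_mono[OF _ order_refl subset_PL])
  then have "derives ({Ax, Cut, Shf} - {Shf}) (PL \<Sigma>) (A, B)"
    by (rule derives_without_Shf[OF _ shift_closed_PL])
  then have "derives {Ax, Cut} (PL \<Sigma>) (A, B)"
    by (simp add: insert_Diff_if)
  then show "\<exists>\<Sigma>'. finite \<Sigma>' \<and> \<Sigma>' \<subseteq> PL \<Sigma> \<and> derivable {Ax, Cut} \<Sigma>' (A, B)"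
    by (simp add: derivable_iff_derives derives_finite_hyps)
next
  assume "\<exists>\<Sigma>'. finite \<Sigma>' \<and> \<Sigma>' \<subseteq> PL \<Sigma> \<and> derivable {Ax, Cut} \<Sigma>' (A, B)"
  then have "derives {Ax, Cut, Shf} (PL \<Sigma>) (A, B)"
    by (auto simp: derivable_iff_derives intro: derives_mono)
  then show "derivable {Ax, Cut, Shf} \<Sigma> (A, B)"
    unfolding derivable_iff_derives
    by (rule derives_trans) (simp add: derives_PL[OF assms(1)])
qed

end
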